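(* Let $n\ge 1$, let $X=\{x_1,\dots,x_n\}$ and $Z=\{z_1,\dots,z_n\}$ be sets of $n$ points equipped with symmetric non-negative functions $d_X\colon X\times X\to\mathbb{R}^+$ and $d_Z\colon Z\times Z\to\mathbb{R}^+$, and let $f_\bullet\colon X\to Z$ be the bijection $f_\bullet(x_i)=z_i$. Fix $\varepsilon>0$ and suppose that $|d_X(x,y)-d_Z(f_\bullet(x),f_\bullet(y))|<\varepsilon$ for all $x,y\in X$. Then, for every positive integer $q$, \[ d^q_{f_0}(B(X),B(Z))\le (n-1)^{1/q}\cdot\varepsilon . \]
   Context: $\mathbb{R}^+=[0,\infty)$. For a finite set $Y=\{y_1,\dots,y_n\}$ with a symmetric non-negative function $d_Y\colon Y\times Y\to\mathbb{R}^+$ (distinct points may have value $0$, and the triangle inequality need not hold): the Vietoris–Rips graph $\mathrm{VR}_0(Y)$ has vertex set $Y$ and no edges, and for $r>0$, $\mathrm{VR}_r(Y)$ has vertex set $Y$ and an edge $[y,y']$ ($y\neq y'$) whenever $d_Y(y,y')\le r$. Let $G_r(Y)$, for $r\ge 0$, denote the graph on $Y$ with an edge $[y,y']$ ($y\ne y'$) whenever $d_Y(y,y')\le r$. $H_0(\mathrm{VR}_r(Y))$ is the $\mathbb{Z}_2$-vector space freely generated by the connected components of $\mathrm{VR}_r(Y)$; $[y]$ denotes the class of $y$. For $b\ge 0$ let $\ker^+_b(Y)\subseteq H_0(\mathrm{VR}_0(Y))$ be the span of all $[y]+[y']$ with $y,y'$ in the same connected component of $G_b(Y)$; let $\ker^-_0(Y)=0$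 and, for $b>0$, $\ker^-_b(Y)$ be the span of all $[y]+[y']$ with $y,y'$ in the same connected component of $G_r(Y)$ for some $0\le r<b$. For $j\in\{2,\dots,n\}$, the death value $b_j$ of $y_j$ is the least $r\ge 0$ such that $y_j$ lies in the same connected component of $G_r(Y)$ as some $y_i$ with $i<j$ ($y_1$ never dies). For $a\ge 0$, $m^Y(a)$ is the number of $j\in\{2,\dots,n\}$ with $b_j=a$; the barcode $B(Y)$ is the multiset of death values with these multiplicities. Given $X,Z,f_\bullet$ as in the claim, $f_0\colon H_0(\mathrm{VR}_0(X))\to H_0(\mathrm{VR}_0(Z))$ is the linear isomorphism $[x_i]\mapsto[z_i]$, and the induced block function is, for $a,b\in\mathbb{R}^+$, \[ \mathcal{M}^0_f(a,b)=\dim\frac{f_0(\ker^+_a(X))\cap\ker^+_b(Z)}{f_0(\ker^-_a(X))\cap\ker^+_b(Z)+f_0(\ker^+_a(X))\cap\ker^-_b(Z)}. \] The induced matching distance is $d^q_{f_0}(B(X),B(Z))=\big(\sum_{a,b\in\mathbb{R}^+}\mathcal{M}^0_f(a,b)\,|a-b|^q\big)^{1/q}$ (only finitely many terms are nonzero). *)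

theory Defs
  imports Complex_Main
begin

text \<open>Points of a finite set Y = {y_0,...,y_(n-1)} are represented by their indices
  0..<n; a "distance" is a function d :: nat => nat => real (only values on indices < n matter).
  H_0(VR_0(Y)) over Z_2 is represented as the finite subsets of {0..<n}
  (a subset = sum of the classes [y_i] of its elements), with addition = symmetric difference.\<close>

definition z2add :: "nat set \<Rightarrow> nat set \<Rightarrow> nat set" where
  "z2add A B = (A - B) \<union> (B - A)"

inductive_set z2span :: "nat set set \<Rightarrow> nat set set" for S where
  zero: "{} \<in> z2span S"
| add: "s \<in> S \<Longrightarrow> v \<in> z2span S \<Longrightarrow> z2add s v \<in> z2span S"

definition z2dim :: "nat set set \<Rightarrow> nat" where
  "z2dim V = (THE k. card V = 2 ^ k)"

definition z2sum :: "nat set set \<Rightarrow> nat set set \<Rightarrow> nat set set" where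
  "z2sum A B = {z2add a b | a b. a \<in> A \<and> b \<in> B}"

definition z2quotdim :: "nat set set \<Rightarrow> nat set set \<Rightarrow> nat" where
  "z2quotdim A W = z2dim A - z2dim W"

definition Gedge :: "(nat \<Rightarrow> nat \<Rightarrow> real) \<Rightarrow> nat \<Rightarrow> real \<Rightarrow> nat \<Rightarrow> nat \<Rightarrow> bool" where
  "Gedge d n r i j \<longleftrightarrow> i < n \<and> j < n \<and> i \<noteq> j \<and> d i j \<le> r"

definition Gconn :: "(nat \<Rightarrow> nat \<Rightarrow> real) \<Rightarrow> nat \<Rightarrow> real \<Rightarrow> nat \<Rightarrow> nat \<Rightarrow> bool" where
  "Gconn d n r i j \<longleftrightarrow> i < n \<and> j < n \<and> (Gedge d n r)\<^sup>*\<^sup>* i j"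

definition ker_plus :: "(nat \<Rightarrow> nat \<Rightarrow> real) \<Rightarrow> nat \<Rightarrow> real \<Rightarrow> nat set set" where
  "ker_plus d n b = z2span {z2add {i} {j} | i j. Gconn d n b i j}"

definition ker_minus :: "(nat \<Rightarrow> nat \<Rightarrow> real) \<Rightarrow> nat \<Rightarrow> real \<Rightarrow> nat set set" where
  "ker_minus d n b = (if b = 0 then {{}} else
     z2span {z2add {i} {j} | i j. \<exists>r. 0 \<le> r \<and> r < b \<and> Gconn d n r i j})"

text \<open>Induced block function; f_0 maps [x_i] to [z_i], i.e. it is the identity on index sets.\<close>
definition block_fun ::
  "(nat \<Rightarrow> nat \<Rightarrow> real) \<Rightarrow> (nat \<Rightarrow> nat \<Rightarrow> real) \<Rightarrow> nat \<Rightarrow> real \<Rightarrow> real \<Rightarrow> nat" where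
  "block_fun dX dZ n a b =
     z2quotdim (ker_plus dX n a \<inter> ker_plus dZ n b)
       (z2sum (ker_minus dX n a \<inter> ker_plus dZ n b) (ker_plus dX n a \<inter> ker_minus dZ n b))"

definition induced_matching_dist ::
  "nat \<Rightarrow> (nat \<Rightarrow> nat \<Rightarrow> real) \<Rightarrow> (nat \<Rightarrow> nat \<Rightarrow> real) \<Rightarrow> nat \<Rightarrow> real" where
  "induced_matching_dist q dX dZ n =
     (\<Sum>(a, b) \<in> {(a, b). 0 \<le> a \<and> 0 \<le> b \<and> block_fun dX dZ n a b \<noteq> 0}.
        real (block_fun dX dZ n a b) * \<bar>a - b\<bar> ^ q) powr (1 / real q)"

end

theory Submission
  imports Defs
begin

(* Away from the finitely many critical values of a distance function the kernels ker^- and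
   ker^+ coincide, and since the two distance functions differ by less than eps, every component
   of G_a(X) lies in a component of G_r(Z) for some r < a + eps, and symmetrically.  Either
   coincidence makes the block function vanish, so it is supported on pairs of critical values
   at distance less than eps.  By Grassmann's formula M(a, b) is the mixed second difference of
   dim (ker_a(X) \<inter> ker_b(Z)) in (a, b), and ker^-_t is ker^+ at the preceding critical value,
   so the total mass of M telescopes to the dimension of an intersection of two spaces of
   even-cardinality vectors, which is at most n - 1.  Hence the q-th power of the distance is
   at most (n - 1) eps^q. *)

definition z2subspace :: "nat set set \<Rightarrow> bool" where
  "z2subspace V \<longleftrightarrow> {} \<in> V \<and> (\<forall>u\<in>V. \<forall>v\<in>V. z2add u v \<in> V)"

lemma z2add_assoc: "z2add (z2add a b) c = z2add a (z2add b c)"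
  unfolding z2add_def by blast

lemma z2add_commute: "z2add a b = z2add b a"
  unfolding z2add_def by blast

lemma z2add_empty [simp]: "z2add {} a = a" "z2add a {} = a"
  unfolding z2add_def by blast+

lemma z2add_self [simp]: "z2add a a = {}"
  unfolding z2add_def by blast

lemma z2add_cancel_left [simp]: "z2add a (z2add a b) = b"
  unfolding z2add_def by blast

lemma inj_on_z2add: "inj_on (z2add s) A"
  by (metis inj_onI z2add_cancel_left)

lemma z2subspace_Int: "z2subspace U \<Longrightarrow> z2subspace V \<Longrightarrow> z2subspace (U \<inter> V)"
  unfolding z2subspace_def by blast

lemma z2subspace_Pow: "z2subspace (Pow A)"
  unfolding z2subspace_def z2add_def by auto

lemma z2span_add: "u \<in> z2span S \<Longrightarrow> v \<in> z2span S \<Longrightarrow> z2add u v \<in> z2span S"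
  by (induction u rule: z2span.induct) (auto simp: z2add_assoc intro: z2span.add)

lemma z2subspace_z2span: "z2subspace (z2span S)"
  unfolding z2subspace_def using z2span_add z2span.zero by blast

lemma z2span_base: "s \<in> S \<Longrightarrow> s \<in> z2span S"
  using z2span.add[OF _ z2span.zero, of s S] by simp

lemma z2span_minimal:
  assumes "S \<subseteq> V" "z2subspace V"
  shows "z2span S \<subseteq> V"
proof
  show "x \<in> V" if "x \<in> z2span S" for x
    using that by (induction x rule: z2span.induct) (use assms in \<open>auto simp: z2subspace_def\<close>)
qed

lemma z2span_mono: "S \<subseteq> T \<Longrightarrow> z2span S \<subseteq> z2span T"
  by (meson z2span_base z2span_minimal z2subspace_z2span subset_iff)

lemma z2span_eq: "z2subspace V \<Longrightarrow> z2span V = V"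
  by (simp add: z2span_base z2span_minimal subset_antisym subsetI)

lemma z2span_empty: "z2span {} = {{}}"
  using z2span_minimal[of "{}" "{{}}"] z2span.zero by (auto simp: z2subspace_def)

lemma z2subspace_Un_coset:
  assumes "z2subspace V"
  shows "z2subspace (V \<union> z2add s ` V)"
proof -
  have "z2add u v \<in> V \<union> z2add s ` V"
    if u: "u \<in> V \<union> z2add s ` V" and v: "v \<in> V \<union> z2add s ` V" for u v
  proof -
    obtain u' where "u' \<in> V" and u': "u = u' \<or> u = z2add s u'"
      using u by blast
    obtain v' where "v' \<in> V" and v': "v = v' \<or> v = z2add s v'"
      using v by blast
    have "z2add u' v' \<in> V"
      using assms \<open>u' \<in> V\<close> \<open>v' \<in> V\<close> by (simp add: z2subspace_def)
    moreover have "z2add (z2add s u') v' = z2add s (z2add u' v')"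
      "z2add u' (z2add s v') = z2add s (z2add u' v')"
      "z2add (z2add s u') (z2add s v') = z2add u' v'"
      unfolding z2add_def by blast+
    ultimately show ?thesis
      using u' v' by (elim disjE) (simp_all add: imageI)
  qed
  then show ?thesis
    using assms unfolding z2subspace_def by blast
qed

lemma z2span_insert: "z2span (insert s S) = z2span S \<union> z2add s ` z2span S"
proof
  have "s \<in> z2add s ` z2span S"
    using image_eqI[of s "z2add s" "{}"] z2span.zero by simp
  then show "z2span (insert s S) \<subseteq> z2span S \<union> z2add s ` z2span S"
    using z2span_minimal[OF _ z2subspace_Un_coset[OF z2subspace_z2span]] z2span_base
    by (metis UnI1 UnI2 insert_subset subsetI)
next
  have sub: "z2span S \<subseteq> z2span (insert s S)" and s: "s \<in> z2span (insert s S)"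
    by (auto intro: z2span_mono[THEN subsetD] z2span_base)
  show "z2span S \<union> z2add s ` z2span S \<subseteq> z2span (insert s S)"
    using sub z2span_add[OF s sub[THEN subsetD]] by blast
qed

lemma card_z2subspace_Un_coset:
  assumes "z2subspace V" "finite V" "s \<notin> V"
  shows "card (V \<union> z2add s ` V) = 2 * card V"
proof -
  have "V \<inter> z2add s ` V = {}"
  proof (rule ccontr)
    assume "V \<inter> z2add s ` V \<noteq> {}"
    then obtain v w where "v \<in> V" "w \<in> V" "v = z2add s w" by blast
    then have "z2add v w = s" by (simp add: z2add_assoc)
    with \<open>v \<in> V\<close> \<open>w \<in> V\<close> assms(1,3) show False by (auto simp: z2subspace_def)
  qed
  then show ?thesis
    using assms(2) by (simp add: card_Un_disjoint card_image inj_on_z2add)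
qed

lemma card_z2span_power_of_2:
  assumes "finite S"
  shows "finite (z2span S) \<and> (\<exists>k. card (z2span S) = 2 ^ k)"
  using assms
proof (induction S rule: finite_induct)
  case empty
  then show ?case by (simp add: z2span_empty) (rule exI[of _ 0], simp)
next
  case (insert s S)
  then obtain k where fin: "finite (z2span S)" and k: "card (z2span S) = 2 ^ k" by blast
  show ?case
  proof (cases "s \<in> z2span S")
    case True
    then have "z2span (insert s S) = z2span S"
      unfolding z2span_insert using z2span_add by blast
    then show ?thesis using fin k by auto
  next
    case False
    then have "card (z2span (insert s S)) = 2 ^ Suc k"
      unfolding z2span_insert using card_z2subspace_Un_coset[OF z2subspace_z2span fin] k by simp
    then show ?thesis using fin unfolding z2span_insert by blast
  qed
qed

lemma z2dim_eqI: "card V = 2 ^ k \<Longrightarrow> z2dim V = k"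
  unfolding z2dim_def by (rule the_equality) auto

lemma card_eq_2_power_z2dim: "z2subspace V \<Longrightarrow> finite V \<Longrightarrow> card V = 2 ^ z2dim V"
  using card_z2span_power_of_2 z2span_eq z2dim_eqI by metis

lemma z2dim_singleton_empty [simp]: "z2dim {{}} = 0"
  by (rule z2dim_eqI) simp

lemma z2dim_mono:
  assumes "z2subspace U" "z2subspace V" "U \<subseteq> V" "finite V"
  shows "z2dim U \<le> z2dim V"
proof -
  have "(2::nat) ^ z2dim U \<le> 2 ^ z2dim V"
    using assms card_mono card_eq_2_power_z2dim finite_subset by metis
  then show ?thesis by simp
qed

lemma z2dim_less_card:
  assumes "z2subspace V" "V \<subseteq> Pow A" "finite A" "s \<in> Pow A - V"
  shows "z2dim V < card A"
proof -
  have fin: "finite V" using assms(2,3) finite_subset by blast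
  have "z2add s ` V \<subseteq> Pow A"
    using assms(2,4) unfolding z2add_def by blast
  then have "2 * card V \<le> card (Pow A)"
    using card_z2subspace_Un_coset[OF assms(1) fin] assms(2,3,4)
    by (metis DiffD2 card_mono finite_Pow_iff le_sup_iff)
  then have "(2::nat) ^ Suc (z2dim V) \<le> 2 ^ card A"
    using card_eq_2_power_z2dim[OF assms(1) fin] assms(3) by (simp add: card_Pow)
  then show ?thesis by (simp only: power_increasing_iff Suc_le_eq)
qed

lemma z2sum_commute: "z2sum H K = z2sum K H"
  unfolding z2sum_def by (rule Collect_cong) (metis z2add_commute)

lemma z2subspace_z2sum:
  assumes H: "z2subspace H" and K: "z2subspace K"
  shows "z2subspace (z2sum H K)"
  unfolding z2subspace_def
proof (intro conjI ballI)
  show "{} \<in> z2sum H K"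
    using H K z2add_empty(1)[of "{}"] unfolding z2sum_def z2subspace_def by blast
next
  fix u v assume "u \<in> z2sum H K" "v \<in> z2sum H K"
  then obtain h k h' k' where hk: "h \<in> H" "k \<in> K" "h' \<in> H" "k' \<in> K"
    and "u = z2add h k" "v = z2add h' k'"
    unfolding z2sum_def by blast
  then have "z2add u v = z2add (z2add h h') (z2add k k')"
    unfolding z2add_def by blast
  then show "z2add u v \<in> z2sum H K"
    using H K hk unfolding z2sum_def z2subspace_def by blast
qed

lemma z2sum_upper1: "{} \<in> K \<Longrightarrow> H \<subseteq> z2sum H K"
  unfolding z2sum_def by force

lemma z2sum_least: "H \<subseteq> V \<Longrightarrow> K \<subseteq> V \<Longrightarrow> z2subspace V \<Longrightarrow> z2sum H K \<subseteq> V"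
  unfolding z2sum_def z2subspace_def by blast

lemma z2sum_eq_image: "z2sum H K = (\<lambda>(h, k). z2add h k) ` (H \<times> K)"
  unfolding z2sum_def by auto

lemma finite_z2sum: "finite H \<Longrightarrow> finite K \<Longrightarrow> finite (z2sum H K)"
  by (simp add: z2sum_eq_image)

lemma z2add_fibre_eq:
  assumes "z2subspace H" "z2subspace K" "h0 \<in> H" "k0 \<in> K"
  shows "{(h, k) \<in> H \<times> K. z2add h k = z2add h0 k0}
    = (\<lambda>t. (z2add h0 t, z2add k0 t)) ` (H \<inter> K)"
proof -
  have "z2add h k = z2add h0 k0 \<longleftrightarrow> (\<exists>t. h = z2add h0 t \<and> k = z2add k0 t)" for h k
  proof
    assume "z2add h k = z2add h0 k0"
    then have "k = z2add k0 (z2add h0 h)"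
      unfolding z2add_def by blast
    then show "\<exists>t. h = z2add h0 t \<and> k = z2add k0 t"
      by (intro exI[of _ "z2add h0 h"]) simp
  next
    assume "\<exists>t. h = z2add h0 t \<and> k = z2add k0 t"
    then show "z2add h k = z2add h0 k0"
      unfolding z2add_def by blast
  qed
  moreover have "z2add h0 t \<in> H \<longleftrightarrow> t \<in> H" "z2add k0 t \<in> K \<longleftrightarrow> t \<in> K" for t
    using assms unfolding z2subspace_def by (metis z2add_cancel_left)+
  ultimately show ?thesis by auto
qed

lemma card_z2sum_mult_card_Int:
  assumes H: "z2subspace H" "finite H" and K: "z2subspace K" "finite K"
  shows "card (z2sum H K) * card (H \<inter> K) = card H * card K"
proof -
  define f where "f = (\<lambda>(h, k). z2add h k)"
  have fibre: "card {p \<in> H \<times> K. f p = x} = card (H \<inter> K)" if x: "x \<in> z2sum H K" for x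
  proof -
    obtain h0 k0 where hk: "h0 \<in> H" "k0 \<in> K" and "x = z2add h0 k0"
      using x unfolding z2sum_def by blast
    then have "{p \<in> H \<times> K. f p = x} = {(h, k) \<in> H \<times> K. z2add h k = z2add h0 k0}"
      unfolding f_def by auto
    also have "\<dots> = (\<lambda>t. (z2add h0 t, z2add k0 t)) ` (H \<inter> K)"
      by (rule z2add_fibre_eq[OF H(1) K(1) hk])
    moreover have "inj_on (\<lambda>t. (z2add h0 t, z2add k0 t)) (H \<inter> K)"
      by (rule inj_onI) (metis fst_conv z2add_cancel_left)
    ultimately show ?thesis
      by (simp add: card_image)
  qed
  have "{x \<in> z2sum H K. f p = x} = {f p}" if "p \<in> H \<times> K" for p
    using that z2sum_eq_image[of H K] unfolding f_def by auto
  then have "card (H \<times> K) = (\<Sum>p\<in>H \<times> K. card {x \<in> z2sum H K. f p = x})"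
    by simp
  also have "\<dots> = card (H \<inter> K) * card (z2sum H K)"
    by (rule sum_multicount) (use H K fibre finite_z2sum in auto)
  finally show ?thesis by (simp add: card_cartesian_product)
qed

lemma z2dim_z2sum_Int:
  assumes "z2subspace H" "finite H" "z2subspace K" "finite K"
  shows "z2dim (z2sum H K) + z2dim (H \<inter> K) = z2dim H + z2dim K"
proof -
  have "(2::nat) ^ (z2dim (z2sum H K) + z2dim (H \<inter> K)) = 2 ^ (z2dim H + z2dim K)"
    using card_z2sum_mult_card_Int[OF assms] card_eq_2_power_z2dim z2subspace_z2sum
      z2subspace_Int finite_z2sum assms
    by (simp add: power_add)
  then show ?thesis by simp
qed

(* 0 is included so that the maximum defining crit_pred d n b exists for every b > 0. *)
definition crit_values :: "(nat \<Rightarrow> nat \<Rightarrow> real) \<Rightarrow> nat \<Rightarrow> real set" where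
  "crit_values d n = insert 0 {d i j | i j. i < n \<and> j < n}"

lemma finite_crit_values: "finite (crit_values d n)"
proof -
  have "{d i j | i j. i < n \<and> j < n} = (\<lambda>(i, j). d i j) ` ({..<n} \<times> {..<n})"
    by auto
  then show ?thesis
    unfolding crit_values_def by simp
qed

definition crit_pred :: "(nat \<Rightarrow> nat \<Rightarrow> real) \<Rightarrow> nat \<Rightarrow> real \<Rightarrow> real" where
  "crit_pred d n b = Max {t \<in> crit_values d n. t < b}"

lemma
  assumes "0 < b"
  shows crit_pred_nonneg: "0 \<le> crit_pred d n b"
    and crit_pred_less: "crit_pred d n b < b"
    and le_crit_pred: "t \<in> crit_values d n \<Longrightarrow> t < b \<Longrightarrow> t \<le> crit_pred d n b"
proof -
  let ?T = "{t \<in> crit_values d n. t < b}"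
  have fin: "finite ?T" and "0 \<in> ?T"
    using finite_crit_values assms by (auto simp: crit_values_def)
  then have "Max ?T \<in> ?T"
    by (intro Max_in) auto
  then show "crit_pred d n b < b"
    unfolding crit_pred_def by simp
  show "0 \<le> crit_pred d n b" "t \<in> crit_values d n \<Longrightarrow> t < b \<Longrightarrow> t \<le> crit_pred d n b"
    unfolding crit_pred_def using fin \<open>0 \<in> ?T\<close> by auto
qed

lemma Gconn_mono_edges:
  assumes "\<And>i j. Gedge d n r i j \<Longrightarrow> Gedge d' n r' i j" "Gconn d n r i j"
  shows "Gconn d' n r' i j"
  using assms rtranclp_mono[of "Gedge d n r" "Gedge d' n r'"] unfolding Gconn_def by blast

lemma ker_plus_mono_edges:
  assumes "\<And>i j. i < n \<Longrightarrow> j < n \<Longrightarrow> i \<noteq> j \<Longrightarrow> d i j \<le> r \<Longrightarrow> d' i j \<le> r'"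
  shows "ker_plus d n r \<subseteq> ker_plus d' n r'"
proof -
  have "Gconn d n r i j \<Longrightarrow> Gconn d' n r' i j" for i j
    by (rule Gconn_mono_edges) (use assms in \<open>auto simp: Gedge_def\<close>)
  then show ?thesis
    unfolding ker_plus_def by (intro z2span_mono) blast
qed

lemma ker_plus_mono: "r \<le> r' \<Longrightarrow> ker_plus d n r \<subseteq> ker_plus d n r'"
  by (rule ker_plus_mono_edges) simp

lemma z2subspace_ker_plus: "z2subspace (ker_plus d n b)"
  unfolding ker_plus_def by (rule z2subspace_z2span)

lemma z2subspace_ker_minus: "z2subspace (ker_minus d n b)"
  unfolding ker_minus_def z2subspace_def using z2subspace_z2span[unfolded z2subspace_def] by simp

lemma ker_minus_nonpos:
  assumes "b \<le> 0"
  shows "ker_minus d n b = {{}}"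
proof -
  have no_generators: "{z2add {i} {j} | i j. \<exists>r. 0 \<le> r \<and> r < b \<and> Gconn d n r i j} = {}"
    using assms by auto
  show ?thesis
    unfolding ker_minus_def by (simp only: no_generators z2span_empty if_cancel)
qed

lemma ker_minus_eq_ker_plus_crit_pred:
  assumes "0 < b"
  shows "ker_minus d n b = ker_plus d n (crit_pred d n b)"
proof -
  have "Gconn d n r i j \<Longrightarrow> Gconn d n (crit_pred d n b) i j" if "r < b" for r i j
    by (rule Gconn_mono_edges)
      (use that assms in \<open>auto simp: Gedge_def crit_values_def intro!: le_crit_pred\<close>)
  then have "{z2add {i} {j} | i j. \<exists>r. 0 \<le> r \<and> r < b \<and> Gconn d n r i j}
    = {z2add {i} {j} | i j. Gconn d n (crit_pred d n b) i j}"
    using crit_pred_nonneg[OF assms] crit_pred_less[OF assms] by blast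
  then show ?thesis
    using assms unfolding ker_minus_def ker_plus_def by simp
qed

lemma ker_minus_subset_ker_plus: "ker_minus d n b \<subseteq> ker_plus d n b"
proof (cases "0 < b")
  case True
  then show ?thesis
    using ker_minus_eq_ker_plus_crit_pred ker_plus_mono crit_pred_less by (metis less_imp_le)
next
  case False
  then show ?thesis
    using ker_minus_nonpos z2subspace_ker_plus unfolding z2subspace_def by simp
qed

lemma ker_minus_eq_ker_plus_if_not_crit:
  assumes "0 \<le> a" "a \<notin> crit_values d n"
  shows "ker_minus d n a = ker_plus d n a"
proof -
  have a: "0 < a" using assms by (auto simp: crit_values_def)
  have "ker_plus d n a \<subseteq> ker_plus d n (crit_pred d n a)"
  proof (rule ker_plus_mono_edges)
    fix i j assume "i < n" "j < n" "d i j \<le> a"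
    moreover from \<open>i < n\<close> \<open>j < n\<close> have "d i j \<in> crit_values d n"
      by (auto simp: crit_values_def)
    ultimately show "d i j \<le> crit_pred d n a"
      using assms(2) by (metis le_crit_pred[OF a] order_le_less)
  qed
  then show ?thesis
    using ker_minus_eq_ker_plus_crit_pred[OF a] ker_minus_subset_ker_plus by blast
qed

lemma ker_plus_subset_ker_minus:
  assumes "0 < b" "\<And>i j. i < n \<Longrightarrow> j < n \<Longrightarrow> i \<noteq> j \<Longrightarrow> d i j \<le> a \<Longrightarrow> d' i j < b"
  shows "ker_plus d n a \<subseteq> ker_minus d' n b"
  unfolding ker_minus_eq_ker_plus_crit_pred[OF assms(1)]
  by (rule ker_plus_mono_edges)
    (use assms in \<open>auto simp: crit_values_def intro!: le_crit_pred\<close>)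

lemma ker_plus_subset_Pow: "ker_plus d n b \<subseteq> Pow {..<n}"
  unfolding ker_plus_def
  by (rule z2span_minimal[OF _ z2subspace_Pow]) (auto simp: Gconn_def z2add_def)

lemma finite_ker_plus: "finite (ker_plus d n b)"
  by (rule finite_subset[OF ker_plus_subset_Pow]) simp

lemma finite_ker_minus: "finite (ker_minus d n b)"
  by (rule finite_subset[OF ker_minus_subset_ker_plus finite_ker_plus])

lemma card_z2add:
  assumes "finite A" "finite B"
  shows "card (z2add A B) + 2 * card (A \<inter> B) = card A + card B"
proof -
  have "card (z2add A B) = card (A - B) + card (B - A)"
    unfolding z2add_def using assms by (intro card_Un_disjoint) auto
  moreover have "card B = card (A \<inter> B) + card (B - A)"
    using card_Int_Diff[OF assms(2), of A] by (simp add: Int_commute)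
  ultimately show ?thesis
    using card_Int_Diff[OF assms(1), of B] by simp
qed

lemma even_card_z2span:
  assumes "\<And>s. s \<in> S \<Longrightarrow> finite s \<and> even (card s)" "x \<in> z2span S"
  shows "finite x \<and> even (card x)"
  using assms(2)
proof (induction x rule: z2span.induct)
  case zero
  then show ?case by simp
next
  case (add s v)
  then have "finite s" "finite v" "even (card s)" "even (card v)"
    using assms(1) by blast+
  then have "even (card (z2add s v) + 2 * card (s \<inter> v))"
    by (simp add: card_z2add)
  then show ?case
    using \<open>finite s\<close> \<open>finite v\<close> by (simp add: z2add_def)
qed

lemma even_card_ker_plus:
  assumes "x \<in> ker_plus d n b"
  shows "even (card x)"
proof (rule even_card_z2span[THEN conjunct2])
  show "x \<in> z2span {z2add {i} {j} | i j. Gconn d n b i j}"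
    using assms unfolding ker_plus_def .
  fix s assume "s \<in> {z2add {i} {j} | i j. Gconn d n b i j}"
  then obtain i j where "s = z2add {i} {j}" by blast
  then show "finite s \<and> even (card s)"
    unfolding z2add_def by (cases "i = j") simp_all
qed

lemma z2dim_ker_plus_Int_le:
  assumes "0 < n"
  shows "z2dim (ker_plus d n a \<inter> ker_plus d' n b) \<le> n - 1"
proof -
  have "{0} \<notin> ker_plus d n a"
    using even_card_ker_plus by fastforce
  moreover have "ker_plus d n a \<inter> ker_plus d' n b \<subseteq> Pow {..<n}"
    using ker_plus_subset_Pow by blast
  ultimately have "z2dim (ker_plus d n a \<inter> ker_plus d' n b) < card {..<n}"
    using assms
    by (intro z2dim_less_card[where s = "{0}"] z2subspace_Int z2subspace_ker_plus) auto
  then show ?thesis by simp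
qed

lemma block_fun_swap: "block_fun dX dZ n a b = block_fun dZ dX n b a"
  unfolding block_fun_def by (subst z2sum_commute) (simp only: Int_commute)

lemma block_fun_eq_0:
  assumes "ker_plus dX n a \<inter> ker_plus dZ n b \<subseteq> ker_minus dX n a"
  shows "block_fun dX dZ n a b = 0"
proof -
  let ?A = "ker_plus dX n a \<inter> ker_plus dZ n b"
  let ?H = "ker_minus dX n a \<inter> ker_plus dZ n b"
  let ?K = "ker_plus dX n a \<inter> ker_minus dZ n b"
  have "?A \<subseteq> ?H" using assms by blast
  also have "?H \<subseteq> z2sum ?H ?K"
    using z2subspace_ker_plus z2subspace_ker_minus
    by (intro z2sum_upper1) (simp add: z2subspace_def)
  also have "z2sum ?H ?K \<subseteq> ?A"
    using ker_minus_subset_ker_plus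
    by (intro z2sum_least z2subspace_Int z2subspace_ker_plus) blast+
  finally have "z2sum ?H ?K = ?A" by blast
  then show ?thesis
    unfolding block_fun_def z2quotdim_def by simp
qed

lemma block_fun_eq_0_if_not_crit:
  assumes "0 \<le> a" "a \<notin> crit_values dX n"
  shows "block_fun dX dZ n a b = 0"
  using ker_minus_eq_ker_plus_if_not_crit[OF assms] by (intro block_fun_eq_0) blast

lemma block_fun_eq_0_if_far:
  assumes "0 < \<epsilon>" "\<forall>i<n. \<forall>j<n. dZ i j < dX i j + \<epsilon>" "0 \<le> a" "a + \<epsilon> \<le> b"
  shows "block_fun dX dZ n a b = 0"
proof -
  have "0 < b"
    using assms(1,3,4) by linarith
  moreover have "dZ i j < b" if "i < n" "j < n" "dX i j \<le> a" for i j
    using assms(2,4) that by fastforce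
  ultimately have "ker_plus dX n a \<subseteq> ker_minus dZ n b"
    by (intro ker_plus_subset_ker_minus)
  then have "block_fun dZ dX n b a = 0"
    by (intro block_fun_eq_0) blast
  then show ?thesis
    using block_fun_swap[of dX dZ n a b] by simp
qed

lemma block_fun_support:
  assumes "0 < \<epsilon>" "\<forall>i<n. \<forall>j<n. \<bar>dX i j - dZ i j\<bar> < \<epsilon>"
    and "0 \<le> a" "0 \<le> b" "block_fun dX dZ n a b \<noteq> 0"
  shows "(a, b) \<in> crit_values dX n \<times> crit_values dZ n \<and> \<bar>a - b\<bar> < \<epsilon>"
proof -
  have swapped: "block_fun dZ dX n b a \<noteq> 0"
    using assms(5) block_fun_swap[of dX dZ n a b] by simp
  have "dZ i j < dX i j + \<epsilon> \<and> dX i j < dZ i j + \<epsilon>" if "i < n" "j < n" for i j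
  proof -
    have "\<bar>dX i j - dZ i j\<bar> < \<epsilon>"
      using assms(2) that by blast
    then show ?thesis by linarith
  qed
  then have "\<forall>i<n. \<forall>j<n. dZ i j < dX i j + \<epsilon>" "\<forall>i<n. \<forall>j<n. dX i j < dZ i j + \<epsilon>"
    by blast+
  then have "\<not> a + \<epsilon> \<le> b" "\<not> b + \<epsilon> \<le> a"
    using block_fun_eq_0_if_far[OF assms(1) _ assms(3), where dX = dX and dZ = dZ and n = n and b = b]
      block_fun_eq_0_if_far[OF assms(1) _ assms(4), where dX = dZ and dZ = dX and n = n and b = a]
      assms(5) swapped
    by auto
  moreover have "a \<in> crit_values dX n" "b \<in> crit_values dZ n"
    using block_fun_eq_0_if_not_crit[OF assms(3), where dX = dX and dZ = dZ and n = n and b = b]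
      block_fun_eq_0_if_not_crit[OF assms(4), where dX = dZ and dZ = dX and n = n and b = a]
      assms(5) swapped
    by auto
  ultimately show ?thesis
    by simp
qed

lemma block_fun_eq:
  "int (block_fun dX dZ n a b) =
     int (z2dim (ker_plus dX n a \<inter> ker_plus dZ n b))
   - int (z2dim (ker_minus dX n a \<inter> ker_plus dZ n b))
   - (int (z2dim (ker_plus dX n a \<inter> ker_minus dZ n b))
   - int (z2dim (ker_minus dX n a \<inter> ker_minus dZ n b)))"
proof -
  let ?A = "ker_plus dX n a \<inter> ker_plus dZ n b"
  let ?H = "ker_minus dX n a \<inter> ker_plus dZ n b"
  let ?K = "ker_plus dX n a \<inter> ker_minus dZ n b"
  have sub: "ker_minus d n t \<subseteq> ker_plus d n t" for d t
    by (rule ker_minus_subset_ker_plus)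
  have subspaces: "z2subspace ?A" "z2subspace ?H" "z2subspace ?K"
    by (intro z2subspace_Int z2subspace_ker_plus z2subspace_ker_minus)+
  have fin: "finite ?A" "finite ?H" "finite ?K"
    using finite_ker_plus finite_ker_minus by blast+
  have "?H \<inter> ?K = ker_minus dX n a \<inter> ker_minus dZ n b"
    using sub by blast
  moreover have "z2dim (z2sum ?H ?K) + z2dim (?H \<inter> ?K) = z2dim ?H + z2dim ?K"
    using subspaces fin by (intro z2dim_z2sum_Int)
  moreover have "z2dim (z2sum ?H ?K) \<le> z2dim ?A"
    using subspaces fin sub
    by (intro z2dim_mono z2subspace_z2sum z2sum_least) blast+
  ultimately show ?thesis
    unfolding block_fun_def z2quotdim_def by simp
qed

lemma sum_diff_telescope:
  fixes T :: "'a::linorder set" and u v :: "'a \<Rightarrow> 'b::ab_group_add"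
  assumes "finite T" "T \<noteq> {}"
    and "\<And>t. t \<in> T \<Longrightarrow> t \<noteq> Min T \<Longrightarrow> v t = u (Max {s \<in> T. s < t})"
  shows "(\<Sum>t\<in>T. u t - v t) = u (Max T) - v (Min T)"
  using assms
proof (induction T rule: finite_linorder_max_induct)
  case empty
  then show ?case by simp
next
  case (insert b A)
  show ?case
  proof (cases "A = {}")
    case True
    then show ?thesis by simp
  next
    case False
    have "Min A \<in> A" "finite A"
      using False insert.hyps(1) by simp_all
    then have "Min A < b" "b \<notin> A"
      using insert.hyps(2) by auto
    have min: "Min (insert b A) = Min A"
      using Min_insert[OF \<open>finite A\<close> False] \<open>Min A < b\<close> by simp
    have max: "Max (insert b A) = b"
      using insert.hyps by (intro Max_eqI) (auto simp: less_imp_le)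
    have "(\<Sum>t\<in>A. u t - v t) = u (Max A) - v (Min A)"
    proof (rule insert.IH[OF False])
      fix t assume "t \<in> A" "t \<noteq> Min A"
      moreover have "{s \<in> insert b A. s < t} = {s \<in> A. s < t}"
        using \<open>t \<in> A\<close> insert.hyps(2) by auto
      ultimately show "v t = u (Max {s \<in> A. s < t})"
        using insert.prems(2)[of t] min by simp
    qed
    moreover have "v b = u (Max A)"
    proof -
      have "{s \<in> insert b A. s < b} = A"
        using insert.hyps(2) by auto
      then show ?thesis
        using insert.prems(2)[of b] min \<open>Min A < b\<close> by simp
    qed
    ultimately show ?thesis
      using min max \<open>b \<notin> A\<close> \<open>finite A\<close> by simp
  qed
qed

lemma sum_ker_telescope:
  fixes h :: "nat set set \<Rightarrow> int"
  assumes "\<forall>i<n. \<forall>j<n. 0 \<le> d i j"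
  shows "(\<Sum>t\<in>crit_values d n. h (ker_plus d n t) - h (ker_minus d n t))
    = h (ker_plus d n (Max (crit_values d n))) - h {{}}"
proof -
  have min: "Min (crit_values d n) = 0"
    using assms finite_crit_values by (intro Min_eqI) (auto simp: crit_values_def)
  have "ker_minus d n t = ker_plus d n (Max {s \<in> crit_values d n. s < t})"
    if "t \<in> crit_values d n" "t \<noteq> Min (crit_values d n)" for t
  proof -
    have "0 < t"
      using that assms unfolding min by (force simp: crit_values_def)
    then show ?thesis
      using ker_minus_eq_ker_plus_crit_pred unfolding crit_pred_def by blast
  qed
  then have "(\<Sum>t\<in>crit_values d n. h (ker_plus d n t) - h (ker_minus d n t))
    = h (ker_plus d n (Max (crit_values d n))) - h (ker_minus d n (Min (crit_values d n)))"
    by (intro sum_diff_telescope finite_crit_values) (auto simp: crit_values_def)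
  then show ?thesis
    unfolding min by (simp add: ker_minus_nonpos)
qed

lemma sum_block_fun_crit_values:
  assumes "\<forall>i<n. \<forall>j<n. 0 \<le> dX i j" "\<forall>i<n. \<forall>j<n. 0 \<le> dZ i j"
  shows "(\<Sum>a\<in>crit_values dX n. \<Sum>b\<in>crit_values dZ n. block_fun dX dZ n a b)
    = z2dim (ker_plus dX n (Max (crit_values dX n)) \<inter> ker_plus dZ n (Max (crit_values dZ n)))"
proof -
  let ?P = "\<lambda>a. ker_plus dX n a" and ?M = "\<lambda>a. ker_minus dX n a"
  let ?top = "ker_plus dZ n (Max (crit_values dZ n))"
  have empty_in: "{} \<in> ker_plus d n t" "{} \<in> ker_minus d n t" for d t
    using z2subspace_ker_plus z2subspace_ker_minus unfolding z2subspace_def by blast+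
  have inner: "(\<Sum>b\<in>crit_values dZ n. int (block_fun dX dZ n a b))
    = int (z2dim (?P a \<inter> ?top)) - int (z2dim (?M a \<inter> ?top))" for a
    unfolding block_fun_eq
    using sum_ker_telescope[OF assms(2), of "\<lambda>K. int (z2dim (?P a \<inter> K)) - int (z2dim (?M a \<inter> K))"]
      empty_in
    by (simp add: Int_absorb1)
  have "int (\<Sum>a\<in>crit_values dX n. \<Sum>b\<in>crit_values dZ n. block_fun dX dZ n a b)
    = (\<Sum>a\<in>crit_values dX n. int (z2dim (?P a \<inter> ?top)) - int (z2dim (?M a \<inter> ?top)))"
    by (simp add: inner)
  also have "\<dots> = int (z2dim (?P (Max (crit_values dX n)) \<inter> ?top))"
    using sum_ker_telescope[OF assms(1), of "\<lambda>K. int (z2dim (K \<inter> ?top))"] empty_in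
    by (simp add: Int_absorb2)
  finally show ?thesis
    by (simp only: of_nat_eq_iff)
qed

lemma induced_matching_dist_le:
  assumes "1 \<le> q" "0 \<le> \<epsilon>" "finite P"
    and support: "\<And>a b. 0 \<le> a \<Longrightarrow> 0 \<le> b \<Longrightarrow> block_fun dX dZ n a b \<noteq> 0
      \<Longrightarrow> (a, b) \<in> P \<and> \<bar>a - b\<bar> \<le> \<epsilon>"
    and mass: "(\<Sum>(a, b)\<in>P. block_fun dX dZ n a b) \<le> N"
  shows "induced_matching_dist q dX dZ n \<le> real N powr (1 / real q) * \<epsilon>"
proof -
  define S where "S = {(a, b). 0 \<le> a \<and> 0 \<le> b \<and> block_fun dX dZ n a b \<noteq> 0}"
  have "S \<subseteq> P"
    using support unfolding S_def by auto
  have "(\<Sum>(a, b)\<in>S. real (block_fun dX dZ n a b) * \<bar>a - b\<bar> ^ q)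
      \<le> (\<Sum>(a, b)\<in>S. real (block_fun dX dZ n a b) * \<epsilon> ^ q)"
    using support unfolding S_def
    by (intro sum_mono) (auto intro!: mult_left_mono power_mono)
  also have "\<dots> \<le> (\<Sum>(a, b)\<in>P. real (block_fun dX dZ n a b) * \<epsilon> ^ q)"
    using \<open>S \<subseteq> P\<close> \<open>finite P\<close> \<open>0 \<le> \<epsilon>\<close>
    by (intro sum_mono2) auto
  also have "\<dots> = real (\<Sum>(a, b)\<in>P. block_fun dX dZ n a b) * \<epsilon> ^ q"
    by (simp add: sum_distrib_right case_prod_unfold)
  also have "\<dots> \<le> real N * \<epsilon> ^ q"
    using of_nat_mono[OF mass] by (rule mult_right_mono) (simp add: \<open>0 \<le> \<epsilon>\<close>)
  finally have le: "(\<Sum>(a, b)\<in>S. real (block_fun dX dZ n a b) * \<bar>a - b\<bar> ^ q) \<le> real N * \<epsilon> ^ q" .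
  have "induced_matching_dist q dX dZ n \<le> (real N * \<epsilon> ^ q) powr (1 / real q)"
    unfolding induced_matching_dist_def S_def[symmetric]
    using le by (intro powr_mono2) (auto intro!: sum_nonneg)
  also have "\<dots> = real N powr (1 / real q) * (\<epsilon> ^ q) powr (1 / real q)"
    using \<open>0 \<le> \<epsilon>\<close> by (simp add: powr_mult)
  also have "(\<epsilon> ^ q) powr (1 / real q) = \<epsilon>"
  proof (cases "\<epsilon> = 0")
    case True
    then show ?thesis using \<open>1 \<le> q\<close> by simp
  next
    case False
    then have "\<epsilon> ^ q = \<epsilon> powr real q"
      using \<open>0 \<le> \<epsilon>\<close> by (simp add: powr_realpow)
    then show ?thesis
      using \<open>1 \<le> q\<close> \<open>0 \<le> \<epsilon>\<close> by (simp add: powr_powr)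
  qed
  finally show ?thesis .
qed

theorem theorem1:
  fixes n q :: nat and dX dZ :: "nat \<Rightarrow> nat \<Rightarrow> real" and \<epsilon> :: real
  assumes "n \<ge> 1"
    and "\<forall>i<n. \<forall>j<n. dX i j = dX j i \<and> 0 \<le> dX i j"
    and "\<forall>i<n. \<forall>j<n. dZ i j = dZ j i \<and> 0 \<le> dZ i j"
    and "\<epsilon> > 0"
    and "\<forall>i<n. \<forall>j<n. \<bar>dX i j - dZ i j\<bar> < \<epsilon>"
    and "q \<ge> 1"
  shows "induced_matching_dist q dX dZ n \<le> real (n - 1) powr (1 / real q) * \<epsilon>"
proof (rule induced_matching_dist_le)
  let ?P = "crit_values dX n \<times> crit_values dZ n"
  show "finite ?P"
    using finite_crit_values by simp
  show "(a, b) \<in> ?P \<and> \<bar>a - b\<bar> \<le> \<epsilon>"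
    if "0 \<le> a" "0 \<le> b" "block_fun dX dZ n a b \<noteq> 0" for a b
    using block_fun_support[OF assms(4,5) that] by simp
  have "(\<Sum>(a, b)\<in>?P. block_fun dX dZ n a b)
    = z2dim (ker_plus dX n (Max (crit_values dX n)) \<inter> ker_plus dZ n (Max (crit_values dZ n)))"
    using sum_block_fun_crit_values assms(2,3) by (simp add: sum.cartesian_product)
  also have "\<dots> \<le> n - 1"
    using assms(1) by (intro z2dim_ker_plus_Int_le) simp
  finally show "(\<Sum>(a, b)\<in>?P. block_fun dX dZ n a b) \<le> n - 1" .
qed (use assms in simp_all)

end
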